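(* Let $X \subset Y \subset \mathbb{R}^{n}$ be finite sets, let $k \geq 0$ be an integer and $r > 0$, and suppose that $X^{k+1}_{dis}$ is $r$-dense in $Y^{k+1}_{dis}$. Let $0 = s_{0} < s_{1} < \dots < s_{m}$ be the phase-change numbers of $Y$, and let $0 \le i < m$ be such that $2r < s_{i+1} - s_{i}$. Then the inclusion $i: L_{s_{i},k}(X) \to L_{s_{i},k}(Y)$ is a weak homotopy equivalence.
   Context: $\mathbb{R}^n$ carries the Euclidean metric $d$. For subsets $A \subset B$ of a metric space and $r>0$, $A$ is $r$-dense in $B$ if for every $b \in B$ there is an $a \in A$ with $d(a,b) < r$. For a finite $X \subset \mathbb{R}^n$ and $s \ge 0$, $V_{s}(X)$ is the Vietoris–Rips complex: vertex set $X$, simplices the nonempty subsets $\{x_0,\dots,x_p\}$ with $d(x_i,x_j) \le s$ for all $i,j$. For an integer $k \geq 0$, the Lesnick complex $L_{s,k}(X)$ is the full subcomplex of $V_{s}(X)$ on the set of vertices $x \in X$ for which there exist at least $k$ points $x' \in X$, distinct from $x$, with $d(x,x') \leq s$. $X^{k+1}_{dis}$ denotes the set of ordered $(k+1)$-tuples of pairwise distinct points of $X$, regarded as a subset of $\mathbb{R}^{n(k+1)}$ with its Euclidean metric. The phase-change numbers of $Y$ are the distinct values of $d(y,y')$, $y,y' \in Y$, listed as $0 = s_{0} < \dots < s_{m}$. A simplicial map is a weak homotopy equivalence if its geometric realization is a homotopy equivalence. *)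

theory Defs
  imports "HOL-Analysis.Analysis"
begin

text \<open>Abstract simplicial complexes are represented as sets of (finite, nonempty) vertex sets.\<close>

definition vietoris_rips :: "real \<Rightarrow> 'a::metric_space set \<Rightarrow> 'a set set" where
  "vietoris_rips s X = {\<sigma>. \<sigma> \<noteq> {} \<and> finite \<sigma> \<and> \<sigma> \<subseteq> X \<and> (\<forall>x\<in>\<sigma>. \<forall>y\<in>\<sigma>. dist x y \<le> s)}"

definition lesnick_vertices :: "real \<Rightarrow> nat \<Rightarrow> 'a::metric_space set \<Rightarrow> 'a set" where
  "lesnick_vertices s k X = {x \<in> X. k \<le> card {x' \<in> X. x' \<noteq> x \<and> dist x x' \<le> s}}"

definition lesnick :: "real \<Rightarrow> nat \<Rightarrow> 'a::metric_space set \<Rightarrow> 'a set set" where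
  "lesnick s k X = {\<sigma> \<in> vietoris_rips s X. \<sigma> \<subseteq> lesnick_vertices s k X}"

text \<open>Geometric realization: barycentric coordinate functions whose support is a simplex,
  with the topology induced from the product topology on functions.\<close>
definition realization_set :: "'a set set \<Rightarrow> ('a \<Rightarrow> real) set" where
  "realization_set K = {t. (\<forall>v. 0 \<le> t v) \<and> {v. t v \<noteq> 0} \<in> K \<and> sum t {v. t v \<noteq> 0} = 1}"

definition realization :: "'a set set \<Rightarrow> ('a \<Rightarrow> real) topology" where
  "realization K = subtopology (powertop_real UNIV) (realization_set K)"

definition realization_map :: "('a \<Rightarrow> 'b) \<Rightarrow> ('a \<Rightarrow> real) \<Rightarrow> ('b \<Rightarrow> real)" where
  "realization_map \<phi> t = (\<lambda>w. \<Sum>v\<in>{v. t v \<noteq> 0 \<and> \<phi> v = w}. t v)"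

definition homotopy_equivalence_map :: "'a topology \<Rightarrow> 'b topology \<Rightarrow> ('a \<Rightarrow> 'b) \<Rightarrow> bool" where
  "homotopy_equivalence_map S T f \<longleftrightarrow>
     continuous_map S T f \<and>
     (\<exists>g. continuous_map T S g \<and>
          homotopic_with (\<lambda>x. True) S S (g \<circ> f) id \<and>
          homotopic_with (\<lambda>x. True) T T (f \<circ> g) id)"

definition weak_homotopy_equivalence :: "'a set set \<Rightarrow> 'b set set \<Rightarrow> ('a \<Rightarrow> 'b) \<Rightarrow> bool" where
  "weak_homotopy_equivalence K L \<phi> \<longleftrightarrow>
     (\<forall>\<sigma>\<in>K. \<phi> ` \<sigma> \<in> L) \<and>
     homotopy_equivalence_map (realization K) (realization L) (realization_map \<phi>)"

text \<open>Ordered (k+1)-tuples of pairwise distinct points, as lists, and the Euclidean metric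
  of the product space.\<close>
definition dis_tuples :: "nat \<Rightarrow> 'a set \<Rightarrow> 'a list set" where
  "dis_tuples k X = {xs. length xs = k + 1 \<and> distinct xs \<and> set xs \<subseteq> X}"

definition tuple_dist :: "('a::euclidean_space) list \<Rightarrow> 'a list \<Rightarrow> real" where
  "tuple_dist xs ys = sqrt (\<Sum>i<length xs. (dist (xs ! i) (ys ! i))\<^sup>2)"

definition tuple_r_dense :: "real \<Rightarrow> ('a::euclidean_space) list set \<Rightarrow> 'a list set \<Rightarrow> bool" where
  "tuple_r_dense r A B \<longleftrightarrow> A \<subseteq> B \<and> (\<forall>b\<in>B. \<exists>a\<in>A. tuple_dist a b < r)"

definition phase_change_numbers :: "('a::metric_space) set \<Rightarrow> nat \<Rightarrow> (nat \<Rightarrow> real) \<Rightarrow> bool" where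
  "phase_change_numbers Y m s \<longleftrightarrow>
     strict_mono_on {..m} s \<and> s ` {..m} = {dist y y' | y y'. y \<in> Y \<and> y' \<in> Y}"

end

theory Submission
  imports Defs
begin

text \<open>Since no pairwise distance of \<open>Y\<close> lies in \<open>(s\<^sub>i, s\<^sub>i + 2r)\<close>, distances below \<open>s\<^sub>i + 2r\<close> are
  already at most \<open>s\<^sub>i\<close>. Applying density to a tuple formed by a Lesnick vertex \<open>y\<close> of \<open>Y\<close> and \<open>k\<close> of
  its neighbours yields a Lesnick vertex of \<open>X\<close> within \<open>r\<close> of \<open>y\<close>. Sending every Lesnick vertex of
  \<open>Y\<close> to such a point (and fixing those of \<open>X\<close>) moves points by less than \<open>r\<close>, so it maps
  simplices of \<open>L(Y)\<close> into \<open>L(X)\<close> and is contiguous to the identity: \<open>\<sigma> \<union> p \<sigma>\<close> is still a simplex.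
  The straight-line homotopy between the realization of \<open>p\<close> and the identity then shows that \<open>p\<close> is
  a homotopy inverse of the inclusion.\<close>

definition downward_closed :: "'a set set \<Rightarrow> bool" where
  "downward_closed K \<longleftrightarrow> (\<forall>\<sigma>\<in>K. \<forall>\<tau>. \<tau> \<noteq> {} \<longrightarrow> \<tau> \<subseteq> \<sigma> \<longrightarrow> \<tau> \<in> K)"

lemma realization_setD:
  assumes "t \<in> realization_set K"
  shows "\<And>v. 0 \<le> t v" "{v. t v \<noteq> 0} \<in> K" "sum t {v. t v \<noteq> 0} = 1"
  using assms by (auto simp: realization_set_def)

lemma topspace_realization [simp]: "topspace (realization K) = realization_set K"
  by (simp add: realization_def)

lemma realization_map_id: "realization_map id = id"
proof (intro ext)
  fix t :: "'a \<Rightarrow> real" and w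
  have "{v. t v \<noteq> 0 \<and> id v = w} = (if t w = 0 then {} else {w})" by auto
  then show "realization_map id t w = id t w" by (simp add: realization_map_def)
qed

lemma realization_map_eq_sum:
  assumes "t \<in> realization_set K" "finite (\<Union>K)"
  shows "realization_map \<phi> t w = (\<Sum>v\<in>{v\<in>\<Union>K. \<phi> v = w}. t v)"
  unfolding realization_map_def
proof (rule sum.mono_neutral_left)
  show "finite {v \<in> \<Union>K. \<phi> v = w}" using assms(2) by (rule rev_finite_subset) auto
  show "{v. t v \<noteq> 0 \<and> \<phi> v = w} \<subseteq> {v \<in> \<Union>K. \<phi> v = w}"
    using realization_setD(2)[OF assms(1)] by blast
qed auto

lemma realization_map_support:
  assumes t: "t \<in> realization_set K" and fin: "finite (\<Union>K)"
  shows "{w. realization_map \<phi> t w \<noteq> 0} = \<phi> ` {v. t v \<noteq> 0}"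
    and "sum (realization_map \<phi> t) (\<phi> ` {v. t v \<noteq> 0}) = 1"
    and "0 \<le> realization_map \<phi> t w"
proof -
  define S where "S = {v. t v \<noteq> 0}"
  have fS: "finite S" using realization_setD(2)[OF t] fin unfolding S_def
    by (meson Union_upper finite_subset)
  have nn: "\<And>v. 0 \<le> t v" and pos: "\<And>v. v \<in> S \<Longrightarrow> 0 < t v" and s1: "sum t S = 1"
    using realization_setD[OF t] unfolding S_def by (auto simp: order_less_le)
  have rm: "realization_map \<phi> t w = sum t {x \<in> S. \<phi> x = w}" for w
    unfolding realization_map_def S_def by (rule sum.cong) auto
  show "{w. realization_map \<phi> t w \<noteq> 0} = \<phi> ` {v. t v \<noteq> 0}"
    unfolding S_def[symmetric]
  proof (intro set_eqI iffI)
    fix w assume "w \<in> {w. realization_map \<phi> t w \<noteq> 0}"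
    then have "{x \<in> S. \<phi> x = w} \<noteq> {}" using rm[of w] by force
    then show "w \<in> \<phi> ` S" by auto
  next
    fix w assume "w \<in> \<phi> ` S"
    then obtain x where x: "x \<in> S" "\<phi> x = w" by auto
    have "0 < sum t {x \<in> S. \<phi> x = w}"
      by (rule sum_pos2[of _ x]) (use fS x pos nn in auto)
    then show "w \<in> {w. realization_map \<phi> t w \<noteq> 0}" using rm[of w] by auto
  qed
  have "sum (realization_map \<phi> t) (\<phi> ` S) = sum t S"
    unfolding rm using sum.image_gen[OF fS, of t \<phi>] by simp
  then show "sum (realization_map \<phi> t) (\<phi> ` {v. t v \<noteq> 0}) = 1" using s1 S_def by simp
  show "0 \<le> realization_map \<phi> t w" using nn by (auto simp: rm intro!: sum_nonneg)
qed

lemma realization_map_in_realization_set: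
  assumes "t \<in> realization_set K" "finite (\<Union>K)" "\<forall>\<sigma>\<in>K. \<phi> ` \<sigma> \<in> L"
  shows "realization_map \<phi> t \<in> realization_set L"
  using realization_map_support[OF assms(1,2), of \<phi>] assms(3) realization_setD[OF assms(1)]
  unfolding realization_set_def by auto

lemma continuous_map_coordinate_sum:
  assumes "continuous_map T (powertop_real UNIV) f" "finite V"
  shows "continuous_map T euclideanreal (\<lambda>x. \<Sum>v\<in>V. f x v)"
proof (rule continuous_map_sum)
  fix v
  show "continuous_map T euclideanreal (\<lambda>x. f x v)"
    using continuous_map_compose[OF assms(1) continuous_map_product_projection, of v]
    by (simp add: o_def)
qed (fact assms(2))

lemma continuous_map_realization_map:
  assumes fin: "finite (\<Union>K)" and img: "\<forall>\<sigma>\<in>K. \<phi> ` \<sigma> \<in> L"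
  shows "continuous_map (realization K) (realization L) (realization_map \<phi>)"
proof -
  have incl: "continuous_map (realization K) (powertop_real UNIV) (\<lambda>t. t)"
    unfolding realization_def by (simp add: continuous_map_from_subtopology)
  have "continuous_map (realization K) (powertop_real UNIV)
      (\<lambda>t w. \<Sum>v\<in>{v\<in>\<Union>K. \<phi> v = w}. t v)"
    unfolding continuous_map_componentwise_UNIV
  proof
    fix w
    show "continuous_map (realization K) euclideanreal (\<lambda>t. \<Sum>v\<in>{v\<in>\<Union>K. \<phi> v = w}. t v)"
      by (rule continuous_map_coordinate_sum[OF incl]) (use fin in \<open>rule rev_finite_subset, auto\<close>)
  qed
  then have "continuous_map (realization K) (powertop_real UNIV) (realization_map \<phi>)"
    by (rule continuous_map_eq) (auto simp: realization_map_eq_sum[OF _ fin])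
  then show ?thesis
    unfolding realization_def continuous_map_in_subtopology
    using realization_map_in_realization_set[OF _ fin img]
    by (auto simp: realization_def)
qed

definition straight_line_homotopy :: "('a \<Rightarrow> 'a) \<Rightarrow> real \<times> ('a \<Rightarrow> real) \<Rightarrow> 'a \<Rightarrow> real" where
  "straight_line_homotopy \<phi> = (\<lambda>(l, t) w. (1 - l) * realization_map \<phi> t w + l * t w)"

lemma straight_line_homotopy_in_realization_set:
  assumes l: "l \<in> {0..1}" and t: "t \<in> realization_set K" and fin: "finite (\<Union>K)"
    and contig: "\<forall>\<sigma>\<in>K. \<sigma> \<union> \<phi> ` \<sigma> \<in> K" and down: "downward_closed K"
  shows "straight_line_homotopy \<phi> (l, t) \<in> realization_set K"
proof -
  define H where "H = straight_line_homotopy \<phi> (l, t)"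
  define S where "S = {v. t v \<noteq> 0}"
  define U where "U = S \<union> \<phi> ` S"
  have SK: "S \<in> K" and nn: "\<And>v. 0 \<le> t v" and s1: "sum t S = 1"
    using realization_setD[OF t] unfolding S_def by auto
  note supp = realization_map_support[OF t fin, of \<phi>, folded S_def]
  have UK: "U \<in> K" using contig SK U_def by auto
  have fU: "finite U" using UK fin by (meson Union_upper finite_subset)
  have nnH: "0 \<le> H w" for w
    using l nn supp(3)[of w] by (auto simp: H_def straight_line_homotopy_def)
  have suppH: "{w. H w \<noteq> 0} \<subseteq> U"
    using supp(1) by (auto simp: H_def straight_line_homotopy_def U_def S_def)
  have "sum H {w. H w \<noteq> 0} = sum H U"
    by (rule sum.mono_neutral_left[OF fU suppH]) auto
  also have "\<dots> = (1 - l) * sum (realization_map \<phi> t) U + l * sum t U"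
    by (simp add: H_def straight_line_homotopy_def sum.distrib sum_distrib_left)
  also have "sum (realization_map \<phi> t) U = sum (realization_map \<phi> t) (\<phi> ` S)"
    by (rule sum.mono_neutral_right) (use fU supp(1) in \<open>auto simp: U_def\<close>)
  also have "sum t U = sum t S"
    by (rule sum.mono_neutral_right) (use fU in \<open>auto simp: U_def S_def\<close>)
  finally have sH: "sum H {w. H w \<noteq> 0} = 1" using supp(2) s1 by simp
  then have "{w. H w \<noteq> 0} \<noteq> {}" by (metis sum.empty zero_neq_one)
  with suppH UK down have "{w. H w \<noteq> 0} \<in> K" unfolding downward_closed_def by simp
  then show ?thesis using sH nnH unfolding H_def realization_set_def by auto
qed

lemma continuous_map_straight_line_homotopy:
  assumes fin: "finite (\<Union>K)"
  shows "continuous_map (prod_topology (top_of_set {0..1}) (realization K)) (powertop_real UNIV)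
           (straight_line_homotopy \<phi>)"
proof -
  let ?P = "prod_topology (top_of_set {0..1::real}) (realization K)"
  have l: "continuous_map ?P euclideanreal fst"
    using continuous_map_fst[of "top_of_set {0..1::real}" "realization K"]
    by (simp add: continuous_map_in_subtopology)
  have t: "continuous_map ?P (powertop_real UNIV) snd"
    using continuous_map_snd[of "top_of_set {0..1::real}" "realization K"]
    by (simp add: realization_def continuous_map_in_subtopology)
  have "continuous_map ?P (powertop_real UNIV)
      (\<lambda>x w. (1 - fst x) * (\<Sum>v\<in>{v\<in>\<Union>K. \<phi> v = w}. snd x v) + fst x * snd x w)"
    unfolding continuous_map_componentwise_UNIV
  proof
    fix w
    have "continuous_map ?P euclideanreal (\<lambda>x. \<Sum>v\<in>{v\<in>\<Union>K. \<phi> v = w}. snd x v)"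
      by (rule continuous_map_coordinate_sum[OF t]) (use fin in \<open>rule rev_finite_subset, auto\<close>)
    moreover have "continuous_map ?P euclideanreal (\<lambda>x. snd x w)"
      using continuous_map_coordinate_sum[OF t, of "{w}"] by simp
    ultimately show "continuous_map ?P euclideanreal
        (\<lambda>x. (1 - fst x) * (\<Sum>v\<in>{v\<in>\<Union>K. \<phi> v = w}. snd x v) + fst x * snd x w)"
      using l by (intro continuous_map_add continuous_map_real_mult continuous_map_diff)
        (auto intro: continuous_map_canonical_const)
  qed
  then show ?thesis
    by (rule continuous_map_eq)
      (auto simp: straight_line_homotopy_def realization_map_eq_sum[OF _ fin])
qed

lemma realization_map_homotopic_id:
  assumes fin: "finite (\<Union>K)" and contig: "\<forall>\<sigma>\<in>K. \<sigma> \<union> \<phi> ` \<sigma> \<in> K" and down: "downward_closed K"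
  shows "homotopic_with (\<lambda>x. True) (realization K) (realization K) (realization_map \<phi>) id"
  unfolding homotopic_with_def
proof (intro exI conjI)
  show "continuous_map (prod_topology (top_of_set {0..1}) (realization K)) (realization K)
          (straight_line_homotopy \<phi>)"
    unfolding realization_def continuous_map_in_subtopology
    using continuous_map_straight_line_homotopy[OF fin, unfolded realization_def]
      straight_line_homotopy_in_realization_set[OF _ _ fin contig down]
    by (auto simp: realization_def)
qed (auto simp: straight_line_homotopy_def)

lemma weak_homotopy_equivalence_inclusion:
  assumes fin: "finite (\<Union>L)" and sub: "K \<subseteq> L"
    and downK: "downward_closed K" and downL: "downward_closed L"
    and retr: "\<forall>\<sigma>\<in>L. p ` \<sigma> \<in> K"
    and contigK: "\<forall>\<sigma>\<in>K. \<sigma> \<union> p ` \<sigma> \<in> K" and contigL: "\<forall>\<sigma>\<in>L. \<sigma> \<union> p ` \<sigma> \<in> L"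
  shows "weak_homotopy_equivalence K L id"
proof -
  have finK: "finite (\<Union>K)" using fin sub by (meson Union_mono finite_subset)
  show ?thesis
    unfolding weak_homotopy_equivalence_def homotopy_equivalence_map_def
  proof (intro conjI exI[of _ "realization_map p"])
    show "continuous_map (realization K) (realization L) (realization_map id)"
      by (rule continuous_map_realization_map[OF finK]) (use sub in auto)
    show "continuous_map (realization L) (realization K) (realization_map p)"
      by (rule continuous_map_realization_map[OF fin retr])
    show "homotopic_with (\<lambda>x. True) (realization K) (realization K) (realization_map p \<circ> realization_map id) id"
      using realization_map_homotopic_id[OF finK contigK downK] by (simp add: realization_map_id)
    show "homotopic_with (\<lambda>x. True) (realization L) (realization L) (realization_map id \<circ> realization_map p) id"
      using realization_map_homotopic_id[OF fin contigL downL] by (simp add: realization_map_id)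
  qed (use sub in auto)
qed

lemma lesnick_iff:
  "\<sigma> \<in> lesnick s k Z \<longleftrightarrow>
     \<sigma> \<noteq> {} \<and> finite \<sigma> \<and> \<sigma> \<subseteq> lesnick_vertices s k Z \<and> (\<forall>x\<in>\<sigma>. \<forall>y\<in>\<sigma>. dist x y \<le> s)"
  unfolding lesnick_def vietoris_rips_def lesnick_vertices_def by auto

lemma lesnick_vertices_subset: "lesnick_vertices s k Z \<subseteq> Z"
  unfolding lesnick_vertices_def by auto

lemma lesnick_vertices_mono:
  assumes "finite Y" "X \<subseteq> Y"
  shows "lesnick_vertices s k X \<subseteq> lesnick_vertices s k Y"
proof
  fix x assume x: "x \<in> lesnick_vertices s k X"
  have "k \<le> card {x' \<in> X. x' \<noteq> x \<and> dist x x' \<le> s}"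
    using x unfolding lesnick_vertices_def by simp
  also have "\<dots> \<le> card {x' \<in> Y. x' \<noteq> x \<and> dist x x' \<le> s}"
    by (rule card_mono) (use assms in auto)
  finally show "x \<in> lesnick_vertices s k Y"
    using x assms unfolding lesnick_vertices_def by auto
qed

lemma lesnick_mono:
  assumes "finite Y" "X \<subseteq> Y"
  shows "lesnick s k X \<subseteq> lesnick s k Y"
proof
  fix \<sigma> assume "\<sigma> \<in> lesnick s k X"
  then show "\<sigma> \<in> lesnick s k Y"
    using lesnick_vertices_mono[OF assms] unfolding lesnick_iff by blast
qed

lemma downward_closed_lesnick: "downward_closed (lesnick s k Z)"
  unfolding downward_closed_def
proof (intro ballI allI impI)
  fix \<sigma> \<tau> assume "\<sigma> \<in> lesnick s k Z" "\<tau> \<noteq> {}" "\<tau> \<subseteq> \<sigma>"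
  then show "\<tau> \<in> lesnick s k Z" using finite_subset[of \<tau> \<sigma>] unfolding lesnick_iff by blast
qed

lemma finite_Union_lesnick:
  assumes "finite Z"
  shows "finite (\<Union>(lesnick s k Z))"
proof (rule finite_subset[OF _ assms], rule subsetI)
  fix x assume "x \<in> \<Union>(lesnick s k Z)"
  then obtain \<sigma> where "\<sigma> \<in> lesnick s k Z" "x \<in> \<sigma>" by blast
  then show "x \<in> Z" using lesnick_vertices_subset[of s k Z] unfolding lesnick_iff by blast
qed

lemma phase_change_numbers_gap:
  assumes "phase_change_numbers Y m s" "i < m" "a \<in> Y" "b \<in> Y" "dist a b < s (i + 1)"
  shows "dist a b \<le> s i"
proof -
  have mono: "strict_mono_on {..m} s"
    and "dist a b \<in> s ` {..m}"
    using assms(1,3,4) unfolding phase_change_numbers_def by auto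
  then obtain j where j: "j \<le> m" "dist a b = s j" by auto
  have "j \<le> i"
  proof (rule ccontr)
    assume "\<not> j \<le> i"
    then have "s (i + 1) \<le> s j"
      using strict_mono_onD[OF mono, of "i + 1" j] j(1) by (cases "j = i + 1") auto
    with j(2) assms(5) show False by simp
  qed
  then show ?thesis
    using strict_mono_onD[OF mono, of j i] j assms(2) by (cases "j = i") auto
qed

lemma dist_nth_less_tuple_dist:
  assumes "tuple_dist xs ys < r" "j < length xs"
  shows "dist (xs ! j) (ys ! j) < r"
proof -
  have "(dist (xs ! j) (ys ! j))\<^sup>2 \<le> (\<Sum>i<length xs. (dist (xs ! i) (ys ! i))\<^sup>2)"
    by (rule member_le_sum) (use assms in auto)
  then have "sqrt ((dist (xs ! j) (ys ! j))\<^sup>2) \<le> tuple_dist xs ys"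
    unfolding tuple_dist_def by (rule real_sqrt_le_mono)
  then show ?thesis using assms(1) by simp
qed

lemma dist_le_of_near_simplex:
  assumes gap: "\<forall>a\<in>Y. \<forall>b\<in>Y. dist a b < s + 2 * r \<longrightarrow> dist a b \<le> s"
    and \<sigma>: "\<forall>x\<in>\<sigma>. \<forall>y\<in>\<sigma>. dist x y \<le> s"
    and u: "u \<in> Y" "a \<in> \<sigma>" "dist u a < r" and v: "v \<in> Y" "b \<in> \<sigma>" "dist v b < r"
  shows "dist u v \<le> s"
proof -
  have "dist u v \<le> dist u a + dist a b + dist b v"
    using dist_triangle[of u v a] dist_triangle[of a v b] by linarith
  also have "\<dots> < s + 2 * r"
    using \<sigma> u v by (fastforce simp: dist_commute)
  finally show ?thesis using gap u v by blast
qed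

lemma lesnick_vertex_near:
  fixes X Y :: "'a::euclidean_space set"
  assumes fX: "finite X" and fY: "finite Y" and XY: "X \<subseteq> Y"
    and dense: "tuple_r_dense r (dis_tuples k X) (dis_tuples k Y)"
    and gap: "\<forall>a\<in>Y. \<forall>b\<in>Y. dist a b < s + 2 * r \<longrightarrow> dist a b \<le> s"
    and y: "y \<in> lesnick_vertices s k Y"
  shows "\<exists>x\<in>lesnick_vertices s k X. dist x y < r"
proof -
  define N where "N = {y' \<in> Y. y' \<noteq> y \<and> dist y y' \<le> s}"
  have yY: "y \<in> Y" and kN: "k \<le> card N" using y unfolding lesnick_vertices_def N_def by auto
  obtain A where AN: "A \<subseteq> N" and cA: "card A = k"
    using obtain_subset_with_card_n[OF kN] by metis
  have "finite A" by (rule finite_subset[OF AN]) (simp add: N_def fY)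
  then obtain zs where zs: "set zs = A" "distinct zs" using finite_distinct_list by blast
  have lzs: "length zs = k" using zs cA distinct_card by metis
  have "y # zs \<in> dis_tuples k Y"
    using zs lzs AN yY unfolding dis_tuples_def N_def by auto
  then obtain xs where xs: "xs \<in> dis_tuples k X" and close: "tuple_dist xs (y # zs) < r"
    using dense unfolding tuple_r_dense_def by blast
  then obtain x0 xt where xe: "xs = x0 # xt" and lxt: "length xt = k"
    and dxt: "distinct (x0 # xt)" and sX: "set (x0 # xt) \<subseteq> X"
    unfolding dis_tuples_def by (cases xs) auto
  have cl: "dist (xs ! j) ((y # zs) ! j) < r" if "j < Suc k" for j
    using dist_nth_less_tuple_dist[OF close] that xe lxt by simp
  have d0: "dist x0 y < r" using cl[of 0] xe by simp
  have "set xt \<subseteq> {x' \<in> X. x' \<noteq> x0 \<and> dist x0 x' \<le> s}"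
  proof
    fix x' assume x': "x' \<in> set xt"
    then obtain j where j: "j < k" "xt ! j = x'" using lxt by (metis in_set_conv_nth)
    have "zs ! j \<in> N" using nth_mem[of j zs] zs AN j lzs by auto
    then have "dist y (zs ! j) \<le> s" "dist x' (zs ! j) < r"
      using cl[of "Suc j"] j xe N_def by auto
    then have "dist x0 x' \<le> s"
      by (intro dist_le_of_near_simplex[OF gap, of "{y, zs ! j}" x0 y x' "zs ! j"])
        (use d0 sX x' XY order_trans[OF zero_le_dist] in \<open>auto simp: dist_commute\<close>)
    then show "x' \<in> {x' \<in> X. x' \<noteq> x0 \<and> dist x0 x' \<le> s}" using dxt sX x' by auto
  qed
  then have "card (set xt) \<le> card {x' \<in> X. x' \<noteq> x0 \<and> dist x0 x' \<le> s}"
    by (rule card_mono[rotated]) (use fX in auto)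
  moreover have "card (set xt) = k" using lxt dxt by (simp add: distinct_card)
  ultimately have "k \<le> card {x' \<in> X. x' \<noteq> x0 \<and> dist x0 x' \<le> s}" by simp
  then have "x0 \<in> lesnick_vertices s k X" using sX unfolding lesnick_vertices_def by simp
  then show ?thesis using d0 by blast
qed

lemma lesnick_image_of_near_map:
  assumes fY: "finite Y" and XY: "X \<subseteq> Y" and r: "0 < r"
    and gap: "\<forall>a\<in>Y. \<forall>b\<in>Y. dist a b < s + 2 * r \<longrightarrow> dist a b \<le> s"
    and p: "\<forall>y\<in>lesnick_vertices s k Y. p y \<in> lesnick_vertices s k X \<and> dist (p y) y < r"
    and \<sigma>: "\<sigma> \<in> lesnick s k Y"
  shows "p ` \<sigma> \<in> lesnick s k X" and "\<sigma> \<union> p ` \<sigma> \<in> lesnick s k Y"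
proof -
  define VX where "VX = lesnick_vertices s k X"
  define VY where "VY = lesnick_vertices s k Y"
  have VX_VY: "VX \<subseteq> VY" unfolding VX_def VY_def by (rule lesnick_vertices_mono[OF fY XY])
  have VY_Y: "VY \<subseteq> Y" unfolding VY_def by (rule lesnick_vertices_subset)
  have \<sigma>_VY: "\<sigma> \<noteq> {}" "finite \<sigma>" "\<sigma> \<subseteq> VY" and \<sigma>_diam: "\<forall>x\<in>\<sigma>. \<forall>y\<in>\<sigma>. dist x y \<le> s"
    using \<sigma> unfolding lesnick_iff VY_def by auto
  have near_\<sigma>: "\<exists>a\<in>\<sigma>. dist u a < r" if "u \<in> \<sigma> \<union> p ` \<sigma>" for u
    using that
  proof (elim UnE imageE)
    assume "u \<in> \<sigma>"
    then show ?thesis using r by (metis dist_self)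
  next
    fix a assume "a \<in> \<sigma>" "u = p a"
    then show ?thesis using p \<sigma>_VY(3) unfolding VY_def by blast
  qed
  have "\<sigma> \<union> p ` \<sigma> \<subseteq> Y" using \<sigma>_VY(3) p VX_VY VY_Y unfolding VX_def VY_def by blast
  then have diam: "\<forall>u\<in>\<sigma> \<union> p ` \<sigma>. \<forall>v\<in>\<sigma> \<union> p ` \<sigma>. dist u v \<le> s"
    using dist_le_of_near_simplex[OF gap \<sigma>_diam] near_\<sigma> by (meson subsetD)
  have "p ` \<sigma> \<subseteq> VX" using \<sigma>_VY(3) p unfolding VX_def VY_def by blast
  then show "p ` \<sigma> \<in> lesnick s k X" and "\<sigma> \<union> p ` \<sigma> \<in> lesnick s k Y"
    unfolding lesnick_iff VX_def[symmetric] VY_def[symmetric]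
    using \<sigma>_VY diam VX_VY by (intro conjI; blast)+
qed

lemma weak_homotopy_equivalence_lesnick_inclusion:
  assumes fY: "finite Y" and XY: "X \<subseteq> Y" and r: "0 < r"
    and gap: "\<forall>a\<in>Y. \<forall>b\<in>Y. dist a b < s + 2 * r \<longrightarrow> dist a b \<le> s"
    and near: "\<forall>y\<in>lesnick_vertices s k Y. \<exists>x\<in>lesnick_vertices s k X. dist x y < r"
  shows "weak_homotopy_equivalence (lesnick s k X) (lesnick s k Y) id"
proof -
  define VX where "VX = lesnick_vertices s k X"
  define p where "p y = (if y \<in> VX then y else SOME x. x \<in> VX \<and> dist x y < r)" for y
  have p_near: "\<forall>y\<in>lesnick_vertices s k Y. p y \<in> VX \<and> dist (p y) y < r"
  proof
    fix y assume "y \<in> lesnick_vertices s k Y"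
    then have "\<exists>x. x \<in> VX \<and> dist x y < r" using near unfolding VX_def by blast
    from someI_ex[OF this] show "p y \<in> VX \<and> dist (p y) y < r" using r by (simp add: p_def)
  qed
  have p_fix: "p ` \<sigma> = \<sigma>" if "\<sigma> \<in> lesnick s k X" for \<sigma>
  proof -
    have "\<sigma> \<subseteq> VX" using that unfolding lesnick_iff VX_def by blast
    then have "p ` \<sigma> = id ` \<sigma>" by (intro image_cong) (auto simp: p_def)
    then show ?thesis by simp
  qed
  note simplicial = lesnick_image_of_near_map[OF fY XY r gap p_near[unfolded VX_def]]
  show ?thesis
  proof (rule weak_homotopy_equivalence_inclusion)
    show "finite (\<Union>(lesnick s k Y))" by (rule finite_Union_lesnick[OF fY])
    show "lesnick s k X \<subseteq> lesnick s k Y" by (rule lesnick_mono[OF fY XY])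
    show "\<forall>\<sigma>\<in>lesnick s k Y. p ` \<sigma> \<in> lesnick s k X" using simplicial(1) by blast
    show "\<forall>\<sigma>\<in>lesnick s k X. \<sigma> \<union> p ` \<sigma> \<in> lesnick s k X" using p_fix by simp
    show "\<forall>\<sigma>\<in>lesnick s k Y. \<sigma> \<union> p ` \<sigma> \<in> lesnick s k Y" using simplicial(2) by blast
  qed (rule downward_closed_lesnick)+
qed

theorem corollary4:
  fixes X Y :: "(real ^ 'n) set" and k :: nat and r :: real
    and m :: nat and s :: "nat \<Rightarrow> real" and i :: nat
  assumes "finite X" and "finite Y" and "X \<subseteq> Y"
    and "r > 0"
    and "tuple_r_dense r (dis_tuples k X) (dis_tuples k Y)"
    and "phase_change_numbers Y m s"
    and "i < m" and "2 * r < s (i + 1) - s i"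
  shows "weak_homotopy_equivalence (lesnick (s i) k X) (lesnick (s i) k Y) id"
proof (rule weak_homotopy_equivalence_lesnick_inclusion)
  show gap: "\<forall>a\<in>Y. \<forall>b\<in>Y. dist a b < s i + 2 * r \<longrightarrow> dist a b \<le> s i"
    using phase_change_numbers_gap[OF assms(6,7)] assms(8) by force
  show "\<forall>y\<in>lesnick_vertices (s i) k Y. \<exists>x\<in>lesnick_vertices (s i) k X. dist x y < r"
    using lesnick_vertex_near[OF assms(1-3,5) gap] by blast
qed (fact assms)+

end
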